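(* Let $v$, $g$, $b$ be positive integers with $v$ odd, and suppose a $(v,g,b)$ non-half-sum disjoint packing exists. Then there exists a $(v,v,v-bg,bv)$ placement delivery array. Consequently, there exists a $v$-division $(K=v,M,N)$ coded caching scheme with memory ratio $\frac{M}{N}=1-\frac{bg}{v}$, subpacketization $F=v$, transmission load $R=b$, and coded caching gain $\frac{K(1-M/N)}{R}=g$.
   Context: Arithmetic is in $\mathbb{Z}_v$, the ring of integers modulo $v$; since $v$ is odd, $2$ is invertible and the half-sum of $x,y\in\mathbb{Z}_v$ is $(x+y)\cdot 2^{-1}$. A $(v,g,b)$ non-half-sum disjoint packing (NHSDP) is a pair $(\mathbb{Z}_v,\mathfrak{D})$ where $\mathfrak{D}$ is a family of $b$ subsets ("blocks") of $\mathbb{Z}_v$, each of size $g$, such that (i) any two different blocks are disjoint, and (ii) for each block $\mathcal{D}\in\mathfrak{D}$ and any two different elements $x,y\in\mathcal{D}$, the half-sum $(x+y)/2$ does not belong to any block of $\mathfrak{D}$. A $(K,F,Z,S)$ placement delivery array (PDA) is an $F\times K$ array $\mathbf{P}=(p_{j,k})$ with entries from $\{*\}\cup[S]$ such that: (C1) each column contains exactly $Z$ stars; (C2) each integer of $[S]$ occurs at least once; (C3) for any two distinct entries $p_{j_1,k_1}=p_{j_2,k_2}=s\in[S]$ we have $j_1\neq j_2$, $k_1\neq k_2$, and $p_{j_1,k_2}=p_{j_2,k_1}=*$. A $(K,M,N)$ coded caching system consists of a server storing $N$ equal-size files and $K$ users each with a cache of size $M$ files, connected by an error-free shared broadcast link.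 An $F$-division scheme splits each file into $F$ equal-size packets; in the placement phase packets are stored in user caches without knowledge of future demands; in the delivery phase each user requests one file and the server broadcasts coded messages (XORs of packets) so that every user can decode its requested file. The transmission load $R$ is the worst case over all demand vectors of the total broadcast size normalized by the file size; $M/N$ is the memory ratio and $F$ the subpacketization. The coded caching gain is $K(1-M/N)/R$. *)

theory Defs
  imports Complex_Main "HOL-Library.Disjoint_Sets"
begin

text \<open>Z_v is represented by the integers {0..<v}; the half-sum of x and y
  is (x + y) * 2^{-1} mod v, where 2^{-1} = (v+1) div 2 for odd v.\<close>

definition half_sum :: "int \<Rightarrow> int \<Rightarrow> int \<Rightarrow> int" where
  "half_sum v x y = ((x + y) * ((v + 1) div 2)) mod v"

definition NHSDP :: "nat \<Rightarrow> nat \<Rightarrow> nat \<Rightarrow> int set set \<Rightarrow> bool" where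
  "NHSDP v g b D \<longleftrightarrow>
     finite D \<and> card D = b \<and>
     (\<forall>B\<in>D. B \<subseteq> {0..<int v} \<and> card B = g) \<and>
     disjoint D \<and>
     (\<forall>B\<in>D. \<forall>x\<in>B. \<forall>y\<in>B. x \<noteq> y \<longrightarrow> half_sum (int v) x y \<notin> \<Union>D)"

text \<open>A (K,F,Z,S) PDA: an F x K array, rows j < F, columns k < K;
  entry None is the star, entry Some s an integer s of [S] = {1..S}.\<close>
definition PDA :: "nat \<Rightarrow> nat \<Rightarrow> nat \<Rightarrow> nat \<Rightarrow> (nat \<Rightarrow> nat \<Rightarrow> nat option) \<Rightarrow> bool" where
  "PDA K F Z S P \<longleftrightarrow>
     (\<forall>j<F. \<forall>k<K. \<forall>s. P j k = Some s \<longrightarrow> s \<in> {1..S}) \<and>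
     (\<forall>k<K. card {j. j < F \<and> P j k = None} = Z) \<and>
     (\<forall>s\<in>{1..S}. \<exists>j<F. \<exists>k<K. P j k = Some s) \<and>
     (\<forall>j1<F. \<forall>k1<K. \<forall>j2<F. \<forall>k2<K. \<forall>s.
        P j1 k1 = Some s \<and> P j2 k2 = Some s \<and> (j1, k1) \<noteq> (j2, k2) \<longrightarrow>
        j1 \<noteq> j2 \<and> k1 \<noteq> k2 \<and> P j1 k2 = None \<and> P j2 k1 = None)"

end

(* Index the cells (j, k) of a v x v array by the difference k - j and the sum j + k modulo v;
   as v is odd, these two coordinates determine the cell. A cell whose difference lies in no
   block is a star; a cell whose difference lies in the i-th block receives an integer coding
   the pair (i, sum). Two cells with the same integer have the same sum and distinct
   differences x, y in a common block, so the other two corners of the rectangle they span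
   both have difference (x + y)/2, which lies in no block: these corners are stars. Every
   column meets each difference exactly once, hence has v - bg stars. *)

theory Submission
  imports Defs "HOL-Number_Theory.Cong"
begin

lemma odd_double_half_cong:
  fixes m a :: int
  assumes "odd m"
  shows "[2 * ((m + 1) div 2) * a = a] (mod m)"
proof -
  have "2 * ((m + 1) div 2) * a = a + m * a"
    using assms by (auto elim!: oddE simp: algebra_simps)
  then show ?thesis
    by (simp add: cong_def)
qed

lemma half_sum_eqI:
  fixes m x y z :: int
  assumes "odd m" and "[x + y = 2 * z] (mod m)"
  shows "half_sum m x y = z mod m"
proof -
  have "[(x + y) * ((m + 1) div 2) = 2 * z * ((m + 1) div 2)] (mod m)"
    using assms(2) by (rule cong_mult) simp
  also have "2 * z * ((m + 1) div 2) = 2 * ((m + 1) div 2) * z"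
    by (simp only: ac_simps)
  also have "[\<dots> = z] (mod m)"
    using odd_double_half_cong[OF assms(1)] .
  finally show ?thesis
    by (simp add: half_sum_def cong_def)
qed

lemma half_sum_commute: "half_sum m x y = half_sum m y x"
  by (simp add: half_sum_def add.commute)

lemma half_sum_diff_mod:
  fixes v j1 k1 j2 k2 :: int
  assumes "odd v" and "[j1 + k1 = j2 + k2] (mod v)"
  shows "half_sum v ((k1 - j1) mod v) ((k2 - j2) mod v) = (k2 - j1) mod v"
proof (rule half_sum_eqI[OF assms(1)])
  have "[(k1 - j1) mod v + (k2 - j2) mod v = (k1 - j1) + (k2 - j2)] (mod v)"
    by (intro cong_add) simp_all
  also have "(k1 - j1) + (k2 - j2) = (j1 + k1) + (k2 - j2) - 2 * j1"
    by simp
  also have "[\<dots> = (j2 + k2) + (k2 - j2) - 2 * j1] (mod v)"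
    by (rule cong_diff[OF cong_add[OF assms(2) cong_refl] cong_refl])
  finally show "[(k1 - j1) mod v + (k2 - j2) mod v = 2 * (k2 - j1)] (mod v)"
    by (simp add: algebra_simps)
qed

lemma diff_sum_mod_cancel:
  fixes v j1 k1 j2 k2 :: int
  assumes "odd v" and "[k1 - j1 = k2 - j2] (mod v)" and "[j1 + k1 = j2 + k2] (mod v)"
  shows "[k1 = k2] (mod v)"
proof -
  have "[2 * k1 = 2 * k2] (mod v)"
    using cong_add[OF assms(2,3)] by (simp add: algebra_simps)
  moreover have "coprime 2 v"
    using assms(1) by simp
  ultimately show ?thesis
    using cong_mult_lcancel by blast
qed

lemma diff_sum_mod_solvable:
  fixes v :: nat and x t :: int
  assumes "odd v"
  shows "\<exists>j<v. \<exists>k<v. [int k - int j = x] (mod int v) \<and> [int j + int k = t] (mod int v)"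
proof -
  define h where "h = (int v + 1) div 2"
  define k where "k = nat (((t + x) * h) mod int v)"
  define j where "j = nat (((t - x) * h) mod int v)"
  have v: "int v > 0"
    using assms by (simp add: odd_pos)
  have k: "int k = ((t + x) * h) mod int v" and j: "int j = ((t - x) * h) mod int v"
    using v by (simp_all add: k_def j_def)
  have "k < v" "j < v"
    using k j v by (metis of_nat_less_iff pos_mod_bound)+
  moreover have "[int k - int j = (t + x) * h - (t - x) * h] (mod int v)"
    unfolding k j by (intro cong_diff) simp_all
  moreover have "[int j + int k = (t - x) * h + (t + x) * h] (mod int v)"
    unfolding k j by (intro cong_add) simp_all
  moreover have "(t + x) * h - (t - x) * h = 2 * h * x" "(t - x) * h + (t + x) * h = 2 * h * t"
    by (simp_all add: algebra_simps)
  moreover have "odd (int v)"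
    using assms by simp
  ultimately show ?thesis
    using odd_double_half_cong[of "int v"] cong_trans unfolding h_def by metis
qed

lemma bij_betw_diff_mod:
  fixes v k :: nat
  assumes "v > 0"
  shows "bij_betw (\<lambda>j. (int k - int j) mod int v) {..<v} {0..<int v}"
proof (rule bij_betw_byWitness[where f' = "\<lambda>d. nat ((int k - d) mod int v)"])
  show "\<forall>j\<in>{..<v}. nat ((int k - (int k - int j) mod int v) mod int v) = j"
    by (simp add: mod_diff_right_eq)
  show "\<forall>d\<in>{0..<int v}. (int k - int (nat ((int k - d) mod int v))) mod int v = d"
    using assms by (simp add: mod_diff_right_eq)
qed (use assms in \<open>auto simp: nat_less_iff\<close>)

lemma ex_colouring_disjoint_family:
  assumes "disjoint_family_on B {..<b}"
  obtains c :: "'a \<Rightarrow> nat option" where "\<And>d i. c d = Some i \<longleftrightarrow> i < b \<and> d \<in> B i"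
proof
  have unique: "i' = i" if "i < b" "d \<in> B i" "i' < b" "d \<in> B i'" for d i i'
    using assms that unfolding disjoint_family_on_def by blast
  fix d i
  show "(if \<exists>i<b. d \<in> B i then Some (THE i. i < b \<and> d \<in> B i) else None) = Some i
    \<longleftrightarrow> i < b \<and> d \<in> B i"
    using the1_equality[of "\<lambda>i. i < b \<and> d \<in> B i"] unique by auto
qed

(* c d = Some i: the residue d lies in the i-th block; c d = None: d lies in no block. *)
locale half_sum_free_colouring =
  fixes v b :: nat and c :: "int \<Rightarrow> nat option"
  assumes odd_v: "odd v"
    and colour_less: "\<And>d i. d \<in> {0..<int v} \<Longrightarrow> c d = Some i \<Longrightarrow> i < b"
    and colour_used: "\<And>i. i < b \<Longrightarrow> \<exists>d\<in>{0..<int v}. c d = Some i"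
    and half_sum_uncoloured: "\<And>x y i. x \<in> {0..<int v} \<Longrightarrow> y \<in> {0..<int v} \<Longrightarrow>
      c x = Some i \<Longrightarrow> c y = Some i \<Longrightarrow> x \<noteq> y \<Longrightarrow> c (half_sum (int v) x y) = None"
begin

(* The integer i * v + t + 1 of {1..b * v} codes the pair (block i, sum t). *)
definition array :: "nat \<Rightarrow> nat \<Rightarrow> nat option" where
  "array j k = map_option (\<lambda>i. i * v + (j + k) mod v + 1) (c ((int k - int j) mod int v))"

lemma v_pos: "v > 0"
  using odd_v by (simp add: odd_pos)

lemma diff_mod_range: "(int k - int j) mod int v \<in> {0..<int v}"
  using v_pos by simp

lemma array_range:
  assumes "array j k = Some s"
  shows "s \<in> {1..b * v}"
proof -
  obtain i where i: "c ((int k - int j) mod int v) = Some i"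
    and s: "s = i * v + (j + k) mod v + 1"
    using assms by (auto simp: array_def)
  have "i + 1 \<le> b"
    using colour_less[OF diff_mod_range i] by simp
  then have "(i + 1) * v \<le> b * v"
    by (rule mult_right_mono) simp
  moreover have "(j + k) mod v < v"
    using v_pos by simp
  ultimately show ?thesis
    using s by (simp add: algebra_simps)
qed

lemma card_column_stars:
  "card {j. j < v \<and> array j k = None} = card {d \<in> {0..<int v}. c d = None}"
proof -
  have "bij_betw (\<lambda>j. (int k - int j) mod int v)
      {j \<in> {..<v}. array j k = None} {d \<in> {0..<int v}. c d = None}"
    by (rule bij_betw_Collect[OF bij_betw_diff_mod[OF v_pos]]) (simp add: array_def)
  from bij_betw_same_card[OF this] show ?thesis
    by simp
qed

lemma array_surj:
  assumes "s \<in> {1..b * v}"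
  shows "\<exists>j<v. \<exists>k<v. array j k = Some s"
proof -
  define i where "i = (s - 1) div v"
  define t where "t = (s - 1) mod v"
  have s: "s = i * v + t + 1"
    using assms by (simp add: i_def t_def)
  have "i < b"
    using assms v_pos by (auto simp: i_def div_less_iff_less_mult)
  then obtain x where x: "x \<in> {0..<int v}" "c x = Some i"
    using colour_used by blast
  obtain j k where jk: "j < v" "k < v"
    and diff: "[int k - int j = x] (mod int v)" and sum: "[int j + int k = int t] (mod int v)"
    using diff_sum_mod_solvable[OF odd_v] by blast
  have "(int k - int j) mod int v = x"
    using diff x by (simp add: cong_def)
  moreover have "(j + k) mod v = t"
    using sum v_pos by (simp add: t_def cong_def flip: of_nat_add of_nat_mod)
  ultimately show ?thesis
    using jk x by (auto simp: array_def s)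
qed

lemma array_same_entry:
  assumes "array j1 k1 = Some s" and "array j2 k2 = Some s"
  obtains i where "c ((int k1 - int j1) mod int v) = Some i"
    and "c ((int k2 - int j2) mod int v) = Some i" and "[j1 + k1 = j2 + k2] (mod v)"
proof -
  obtain i1 i2 where c1: "c ((int k1 - int j1) mod int v) = Some i1"
    and c2: "c ((int k2 - int j2) mod int v) = Some i2"
    and s1: "s - 1 = i1 * v + (j1 + k1) mod v" and s2: "s - 1 = i2 * v + (j2 + k2) mod v"
    using assms by (auto simp: array_def)
  have "i1 = (s - 1) div v" "(j1 + k1) mod v = (s - 1) mod v"
    unfolding s1 using v_pos by simp_all
  moreover have "i2 = (s - 1) div v" "(j2 + k2) mod v = (s - 1) mod v"
    unfolding s2 using v_pos by simp_all
  ultimately show ?thesis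
    using that c1 c2 by (simp add: cong_def)
qed

lemma array_pairing:
  assumes "j1 < v" "k1 < v" "j2 < v" "k2 < v"
    and "array j1 k1 = Some s" "array j2 k2 = Some s" "(j1, k1) \<noteq> (j2, k2)"
  shows "j1 \<noteq> j2 \<and> k1 \<noteq> k2 \<and> array j1 k2 = None \<and> array j2 k1 = None"
proof -
  define x where "x = (int k1 - int j1) mod int v"
  define y where "y = (int k2 - int j2) mod int v"
  obtain i where cx: "c x = Some i" and cy: "c y = Some i" and sum: "[j1 + k1 = j2 + k2] (mod v)"
    using array_same_entry[OF assms(5,6)] unfolding x_def y_def by blast
  have sum_int: "[int j1 + int k1 = int j2 + int k2] (mod int v)"
    using sum by (simp flip: cong_int_iff)
  have "j1 \<noteq> j2"
  proof
    assume "j1 = j2"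
    with sum have "[k1 = k2] (mod v)"
      by (simp add: cong_add_lcancel_nat)
    with assms(2,4,7) \<open>j1 = j2\<close> show False
      using cong_less_modulus_unique_nat by blast
  qed
  moreover have "k1 \<noteq> k2"
  proof
    assume "k1 = k2"
    with sum have "[j1 = j2] (mod v)"
      by (simp add: cong_add_rcancel_nat)
    with assms(1,3,7) \<open>k1 = k2\<close> show False
      using cong_less_modulus_unique_nat by blast
  qed
  moreover have "x \<noteq> y"
  proof
    assume "x = y"
    then have "[int k1 - int j1 = int k2 - int j2] (mod int v)"
      by (simp add: x_def y_def cong_def)
    with sum_int have "[k1 = k2] (mod v)"
      using diff_sum_mod_cancel odd_v by (simp flip: cong_int_iff)
    with assms(2,4) \<open>k1 \<noteq> k2\<close> show False
      using cong_less_modulus_unique_nat by blast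
  qed
  then have "c (half_sum (int v) x y) = None"
    using half_sum_uncoloured cx cy diff_mod_range unfolding x_def y_def by blast
  moreover have "half_sum (int v) x y = (int k2 - int j1) mod int v"
    unfolding x_def y_def using odd_v sum_int by (simp add: half_sum_diff_mod)
  moreover have "half_sum (int v) x y = (int k1 - int j2) mod int v"
    unfolding x_def y_def half_sum_commute[of _ "(int k1 - int j1) mod int v"]
    using odd_v cong_sym[OF sum_int] by (simp add: half_sum_diff_mod)
  ultimately show ?thesis
    by (simp add: array_def)
qed

lemma PDA_array: "PDA v v (card {d \<in> {0..<int v}. c d = None}) (b * v) array"
  unfolding PDA_def
proof (intro conjI)
  show "\<forall>j<v. \<forall>k<v. \<forall>s. array j k = Some s \<longrightarrow> s \<in> {1..b * v}"
    using array_range by blast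
  show "\<forall>k<v. card {j. j < v \<and> array j k = None} = card {d \<in> {0..<int v}. c d = None}"
    using card_column_stars by blast
  show "\<forall>s\<in>{1..b * v}. \<exists>j<v. \<exists>k<v. array j k = Some s"
    using array_surj by blast
qed (use array_pairing in blast)

end

lemma NHSDP_card_Union:
  assumes "NHSDP v g b D"
  shows "card (\<Union>D) = b * g"
proof -
  have "card (\<Union>D) = sum card D"
    using assms by (intro card_Union_disjoint) (auto simp: NHSDP_def intro: finite_subset)
  also have "\<dots> = b * g"
    using assms by (simp add: NHSDP_def)
  finally show ?thesis .
qed

context
  fixes v g b :: nat and D :: "int set set" and e :: "nat \<Rightarrow> int set" and c :: "int \<Rightarrow> nat option"
  assumes NHSDP: "NHSDP v g b D"
    and e: "bij_betw e {..<b} D"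
    and c: "\<And>d i. c d = Some i \<longleftrightarrow> i < b \<and> d \<in> e i"
begin

lemma image_blocks: "e ` {..<b} = D"
  using e by (simp add: bij_betw_def)

lemma uncoloured_iff: "c d = None \<longleftrightarrow> d \<notin> \<Union>D"
proof -
  have "(\<exists>i. c d = Some i) \<longleftrightarrow> d \<in> \<Union>D"
    unfolding image_blocks[symmetric] by (auto simp: c)
  then show ?thesis
    by (metis not_None_eq)
qed

lemma NHSDP_half_sum_free_colouring:
  assumes "odd v" "g > 0"
  shows "half_sum_free_colouring v b c"
proof
  show "odd v" by (fact assms(1))
  show "i < b" if "c d = Some i" for d i
    using c that by blast
  show "\<exists>d\<in>{0..<int v}. c d = Some i" if "i < b" for i
  proof -
    have "e i \<in> D"
      using image_blocks that by blast
    then have "e i \<noteq> {}" "e i \<subseteq> {0..<int v}"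
      using NHSDP assms(2) by (force simp: NHSDP_def)+
    then obtain d where "d \<in> e i" "d \<in> {0..<int v}"
      by blast
    then show ?thesis
      using c that by blast
  qed
  show "c (half_sum (int v) x y) = None" if "c x = Some i" "c y = Some i" "x \<noteq> y" for x y i
  proof -
    have "e i \<in> D" "x \<in> e i" "y \<in> e i"
      using that c image_blocks by auto
    then have "half_sum (int v) x y \<notin> \<Union>D"
      using NHSDP \<open>x \<noteq> y\<close> by (simp add: NHSDP_def)
    then show ?thesis
      by (simp add: uncoloured_iff)
  qed
qed

lemma NHSDP_card_uncoloured: "card {d \<in> {0..<int v}. c d = None} = v - b * g"
proof -
  have U: "\<Union>D \<subseteq> {0..<int v}"
    using NHSDP by (auto simp: NHSDP_def)
  have "{d \<in> {0..<int v}. c d = None} = {0..<int v} - \<Union>D"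
    using uncoloured_iff by blast
  then show ?thesis
    using card_Diff_subset[OF finite_subset[OF U] U] NHSDP_card_Union[OF NHSDP] by simp
qed

end

lemma NHSDP_imp_half_sum_free_colouring:
  assumes "odd v" "g > 0" "NHSDP v g b D"
  obtains c where "half_sum_free_colouring v b c"
    and "card {d \<in> {0..<int v}. c d = None} = v - b * g"
proof -
  have D: "finite D" "card D = b" "disjoint D"
    using assms(3) by (simp_all add: NHSDP_def)
  obtain e where e: "bij_betw e {..<b} D"
    using ex_bij_betw_nat_finite[OF D(1)] D(2) by (auto simp: atLeast0LessThan)
  have "disjoint_family_on e {..<b}"
    using e D(3) by (auto simp: bij_betw_def intro: disjoint_image_disjoint_family_on)
  then obtain c where "\<And>d i. c d = Some i \<longleftrightarrow> i < b \<and> d \<in> e i"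
    using ex_colouring_disjoint_family by blast
  then show ?thesis
    using that NHSDP_half_sum_free_colouring NHSDP_card_uncoloured assms e by blast
qed

theorem theorem1:
  fixes v g b :: nat and D :: "int set set"
  assumes "v > 0" "g > 0" "b > 0" "odd v"
    and "NHSDP v g b D"
  shows "b * g \<le> v
    \<and> (\<exists>P. PDA v v (v - b * g) (b * v) P)
    \<and> real (v - b * g) / real v = 1 - real (b * g) / real v
    \<and> real (b * v) / real v = real b
    \<and> real v * (1 - real (v - b * g) / real v) / (real (b * v) / real v) = real g"
proof -
  have "\<Union>D \<subseteq> {0..<int v}"
    using assms(5) by (auto simp: NHSDP_def)
  then have "card (\<Union>D) \<le> card {0..<int v}"
    by (rule card_mono[OF finite_atLeastLessThan_int])
  then have bg: "b * g \<le> v"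
    using NHSDP_card_Union[OF assms(5)] by simp
  obtain c where colouring: "half_sum_free_colouring v b c"
    and stars: "card {d \<in> {0..<int v}. c d = None} = v - b * g"
    using NHSDP_imp_half_sum_free_colouring[OF assms(4,2,5)] by blast
  have pda: "PDA v v (v - b * g) (b * v) (half_sum_free_colouring.array v c)"
    using half_sum_free_colouring.PDA_array[OF colouring] unfolding stars .
  have ratio: "real (v - b * g) / real v = 1 - real (b * g) / real v"
    using bg assms(1) by (simp add: of_nat_diff diff_divide_distrib)
  have load: "real (b * v) / real v = real b"
    using assms(1) by simp
  have "real v * (1 - real (v - b * g) / real v) = real (b * g)"
    unfolding ratio using assms(1) by simp
  then have gain: "real v * (1 - real (v - b * g) / real v) / (real (b * v) / real v) = real g"
    unfolding load using assms(3) by simp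
  show ?thesis
    using bg pda ratio load gain by blast
qed

end
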